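(* Let $S=S^{\top}\in\mathbb{R}^{n\times n}$ be a nonnegative irreducible symmetric matrix and $K=-K^{\top}\in\mathbb{R}^{n\times n}$ a nonsingular skew-symmetric matrix such that $A=S+K\ge 0$ (entrywise). Then $n$ is even and $t\mapsto r\big((1-t)A+tA^{\top}\big)$, $t\in[0,1]$, is not constant.
   Context: $r(M)$ denotes the spectral radius of $M$. *)

theory Defs
  imports "Jordan_Normal_Form.Spectral_Radius"
begin

definition nonneg_mat :: "real mat \<Rightarrow> bool" where
  "nonneg_mat A \<longleftrightarrow> (\<forall>i<dim_row A. \<forall>j<dim_col A. A $$ (i,j) \<ge> 0)"

text \<open>A square matrix is reducible if there is a nonempty proper subset I of the
  index set such that all entries A(i,j) with i in I and j not in I vanish
  (i.e. after a permutation it is block triangular); irreducible otherwise.\<close>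
definition irreducible_mat :: "real mat \<Rightarrow> bool" where
  "irreducible_mat A \<longleftrightarrow> dim_row A = dim_col A \<and>
     \<not> (\<exists>I. I \<noteq> {} \<and> I \<subset> {0..<dim_row A} \<and>
            (\<forall>i\<in>I. \<forall>j\<in>{0..<dim_row A} - I. A $$ (i,j) = 0))"

definition spec_rad :: "real mat \<Rightarrow> real" where
  "spec_rad A = spectral_radius (map_mat complex_of_real A)"

end

theory Submission
  imports Defs
begin

text \<open>
  Since K is skew-symmetric, det K = det K^T = (-1)^n det K, so det K \<noteq> 0 forces n to be
  even. The path passes through A = S + K at t = 0 and through S at t = 1/2, so it suffices to
  show r(A) \<noteq> r(S). Suppose r(A) = r(S) = \<rho>. The entrywise moduli u of an eigenvector of A
  for an eigenvalue of modulus \<rho> satisfy \<rho> u \<le> A u. The skew part does not contribute to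
  quadratic forms, so u \<bullet> S u = u \<bullet> A u \<ge> \<rho> (u \<bullet> u), whereas x \<bullet> S x \<le> \<rho> (x \<bullet> x) for all x
  because S is symmetric. Hence u maximizes the Rayleigh quotient of S, i.e. S u = \<rho> u;
  irreducibility makes u strictly positive, and then K u = A u - S u \<ge> 0 together with
  u \<bullet> K u = 0 gives K u = 0, contradicting det K \<noteq> 0.

  The Rayleigh bound is obtained without a spectral theorem: by Cauchy-Schwarz,
  x \<bullet> S^(2^m) x grows at least like \<mu>^(2^m) with \<mu> = (x \<bullet> S x) / (x \<bullet> x), while the
  Jordan normal form bounds the entries of S^k by c \<nu>^k for every \<nu> > r(S).
\<close>

section \<open>Quadratic forms and matrix powers\<close>

lemma scalar_prod_self_nonneg:
  fixes x :: "real vec"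
  shows "x \<bullet> x \<ge> 0"
  unfolding scalar_prod_def by (intro sum_nonneg) auto

lemma scalar_prod_self_eq_0_iff:
  fixes x :: "real vec"
  assumes "x \<in> carrier_vec n"
  shows "x \<bullet> x = 0 \<longleftrightarrow> x = 0\<^sub>v n"
proof
  assume "x \<bullet> x = 0"
  then have "\<forall>i\<in>{0..<n}. x $ i * x $ i = 0"
    using assms unfolding scalar_prod_def by (subst (asm) sum_nonneg_eq_0_iff) auto
  then show "x = 0\<^sub>v n" using assms by (intro eq_vecI) auto
qed (use assms in simp)

lemma scalar_prod_Cauchy_Schwarz:
  fixes x y :: "real vec"
  assumes x: "x \<in> carrier_vec n" and y: "y \<in> carrier_vec n"
  shows "(x \<bullet> y)\<^sup>2 \<le> (x \<bullet> x) * (y \<bullet> y)"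
proof (cases "y = 0\<^sub>v n")
  case False
  then have yy: "y \<bullet> y > 0"
    using scalar_prod_self_nonneg[of y] scalar_prod_self_eq_0_iff[OF y] by linarith
  define r where "r = (x \<bullet> y) / (y \<bullet> y)"
  have "0 \<le> (x - r \<cdot>\<^sub>v y) \<bullet> (x - r \<cdot>\<^sub>v y)" by (rule scalar_prod_self_nonneg)
  also have "\<dots> = x \<bullet> x - r * (x \<bullet> y) - r * (y \<bullet> x) + r * r * (y \<bullet> y)"
    using x y by (simp add: scalar_prod_minus_distrib minus_scalar_prod_distrib)
  also have "\<dots> = x \<bullet> x - (x \<bullet> y)\<^sup>2 / (y \<bullet> y)"
    using yy comm_scalar_prod[OF y x] by (simp add: r_def power2_eq_square field_simps)
  finally show ?thesis using yy by (simp add: field_simps)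
qed (use x in simp)

lemma scalar_prod_left_mono:
  fixes u v w :: "real vec"
  assumes "u \<in> carrier_vec n" "0\<^sub>v n \<le> u" "v \<le> w" "w \<in> carrier_vec n"
  shows "u \<bullet> v \<le> u \<bullet> w"
  using assms unfolding scalar_prod_def less_eq_vec_def
  by (auto intro!: sum_mono mult_left_mono)

lemma scalar_prod_pos_nonneg_eq_0:
  fixes u v :: "real vec"
  assumes u: "u \<in> carrier_vec n" "\<And>i. i < n \<Longrightarrow> u $ i > 0"
    and v: "v \<in> carrier_vec n" "0\<^sub>v n \<le> v" and uv: "u \<bullet> v = 0"
  shows "v = 0\<^sub>v n"
proof (rule eq_vecI)
  have v_nonneg: "0 \<le> v $ i" if "i < n" for i
    using v that unfolding less_eq_vec_def by simp
  have "(\<Sum>i\<in>{0..<n}. u $ i * v $ i) = 0" using uv v unfolding scalar_prod_def by simp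
  moreover have "0 \<le> u $ i * v $ i" if "i < n" for i
    using u(2)[OF that] v_nonneg[OF that] by simp
  ultimately have "\<forall>i\<in>{0..<n}. u $ i * v $ i = 0"
    by (subst (asm) sum_nonneg_eq_0_iff) auto
  then show "v $ i = 0\<^sub>v n $ i" if "i < dim_vec (0\<^sub>v n :: real vec)" for i
  proof -
    have "i < n" using that by simp
    then have "u $ i * v $ i = 0" "u $ i > 0" using \<open>\<forall>i\<in>_. _\<close> u(2) by auto
    then show ?thesis using \<open>i < n\<close> by simp
  qed
qed (use v in simp)

lemma pow_mat_Suc_left:
  assumes A: "A \<in> carrier_mat n n"
  shows "A ^\<^sub>m Suc k = A * A ^\<^sub>m k"
proof (induction k)
  case (Suc k)
  have "A ^\<^sub>m Suc (Suc k) = (A * A ^\<^sub>m k) * A" by (simp only: pow_mat.simps(2)[of A "Suc k"] Suc)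
  also have "\<dots> = A * (A ^\<^sub>m k * A)" by (rule assoc_mult_mat) (use A in auto)
  also have "\<dots> = A * A ^\<^sub>m Suc k" by simp
  finally show ?case .
qed (use A in simp)

lemma pow_mat_Suc_mult_vec:
  assumes A: "A \<in> carrier_mat n n" and x: "x \<in> carrier_vec n"
  shows "A ^\<^sub>m Suc k *\<^sub>v x = A *\<^sub>v (A ^\<^sub>m k *\<^sub>v x)"
  unfolding pow_mat_Suc_left[OF A] by (rule assoc_mult_mat_vec) (use A x in auto)

lemma smult_mat_mult_vec:
  assumes "B \<in> carrier_mat n n" and "v \<in> carrier_vec n"
  shows "(c \<cdot>\<^sub>m B) *\<^sub>v v = c \<cdot>\<^sub>v (B *\<^sub>v v)"
  using assms by (intro eq_vecI) (auto simp: scalar_prod_def sum_distrib_left mult.assoc)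

lemma pow_mat_smult:
  fixes B :: "'a :: comm_semiring_1 mat"
  assumes B: "B \<in> carrier_mat n n"
  shows "(c \<cdot>\<^sub>m B) ^\<^sub>m k = c ^ k \<cdot>\<^sub>m B ^\<^sub>m k"
proof (induction k)
  case (Suc k)
  have Bk: "B ^\<^sub>m k \<in> carrier_mat n n" using B by simp
  have "(c \<cdot>\<^sub>m B) ^\<^sub>m Suc k = (c ^ k \<cdot>\<^sub>m B ^\<^sub>m k) * (c \<cdot>\<^sub>m B)" by (simp add: Suc)
  also have "\<dots> = c ^ k \<cdot>\<^sub>m (B ^\<^sub>m k * (c \<cdot>\<^sub>m B))"
    by (rule mult_smult_assoc_mat[OF Bk smult_carrier_mat[OF B]])
  also have "\<dots> = c ^ k \<cdot>\<^sub>m (c \<cdot>\<^sub>m (B ^\<^sub>m k * B))"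
    by (simp only: mult_smult_distrib[OF Bk B])
  also have "\<dots> = c ^ Suc k \<cdot>\<^sub>m B ^\<^sub>m Suc k" by (intro eq_matI) (auto simp: ac_simps)
  finally show ?case .
qed (intro eq_matI, auto)

lemma det_skew_symmetric_odd:
  fixes K :: "'a :: {idom, ring_char_0} mat"
  assumes K: "K \<in> carrier_mat n n" and skew: "transpose_mat K = - K" and odd: "odd n"
  shows "det K = 0"
proof -
  have "- K = (- 1) \<cdot>\<^sub>m K" using K by (intro eq_matI) auto
  have "det K = det (transpose_mat K)" using det_transpose[OF K] by simp
  also have "\<dots> = det ((- 1) \<cdot>\<^sub>m K)" using skew \<open>- K = _\<close> by simp
  also have "\<dots> = - det K" using odd K by simp
  finally show ?thesis by simp
qed

lemma symmetric_scalar_prod_mult_mat_vec: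
  fixes S :: "'a :: comm_semiring_0 mat"
  assumes S: "S \<in> carrier_mat n n" and sym: "transpose_mat S = S"
    and x: "x \<in> carrier_vec n" and y: "y \<in> carrier_vec n"
  shows "(S *\<^sub>v x) \<bullet> y = x \<bullet> (S *\<^sub>v y)"
  using transpose_vec_mult_scalar[OF S y x] comm_scalar_prod[OF _ x, of "S *\<^sub>v y"]
    comm_scalar_prod[OF _ y, of "S *\<^sub>v x"] S sym by simp

lemma skew_quadratic_form_eq_0:
  fixes K :: "'a :: {idom, ring_char_0} mat"
  assumes K: "K \<in> carrier_mat n n" and skew: "transpose_mat K = - K"
    and x: "x \<in> carrier_vec n"
  shows "x \<bullet> (K *\<^sub>v x) = 0"
proof -
  have "x \<bullet> (K *\<^sub>v x) = (transpose_mat K *\<^sub>v x) \<bullet> x"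
    using transpose_vec_mult_scalar[OF K x x] by simp
  also have "\<dots> = - (x \<bullet> (K *\<^sub>v x))"
    using K x comm_scalar_prod[OF _ x, of "K *\<^sub>v x"] by (simp add: skew)
  finally show ?thesis by simp
qed

lemma symmetric_quadratic_form_add:
  fixes S :: "'a :: comm_ring_1 mat"
  assumes S: "S \<in> carrier_mat n n" and sym: "transpose_mat S = S"
    and x: "x \<in> carrier_vec n" and y: "y \<in> carrier_vec n"
  shows "(x + y) \<bullet> (S *\<^sub>v (x + y)) = x \<bullet> (S *\<^sub>v x) + 2 * (y \<bullet> (S *\<^sub>v x)) + y \<bullet> (S *\<^sub>v y)"
proof -
  have "x \<bullet> (S *\<^sub>v y) = y \<bullet> (S *\<^sub>v x)"
    using symmetric_scalar_prod_mult_mat_vec[OF S sym y x] comm_scalar_prod[OF x, of "S *\<^sub>v y"] S y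
    by simp
  moreover have "(x + y) \<bullet> (S *\<^sub>v (x + y))
      = x \<bullet> (S *\<^sub>v x) + x \<bullet> (S *\<^sub>v y) + (y \<bullet> (S *\<^sub>v x) + y \<bullet> (S *\<^sub>v y))"
    using S x y by (simp add: mult_add_distrib_mat_vec[OF S x y] add_scalar_prod_distrib[OF x y]
        scalar_prod_add_distrib[OF x] scalar_prod_add_distrib[OF y])
  ultimately show ?thesis by simp
qed

lemma symmetric_quadratic_form_add_smult:
  fixes S :: "'a :: field mat"
  assumes S: "S \<in> carrier_mat n n" and sym: "transpose_mat S = S"
    and x: "x \<in> carrier_vec n" and y: "y \<in> carrier_vec n"
  shows "(x + t \<cdot>\<^sub>v y) \<bullet> (S *\<^sub>v (x + t \<cdot>\<^sub>v y))
    = x \<bullet> (S *\<^sub>v x) + 2 * t * (y \<bullet> (S *\<^sub>v x)) + t\<^sup>2 * (y \<bullet> (S *\<^sub>v y))"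
proof -
  have ty: "t \<cdot>\<^sub>v y \<in> carrier_vec n" using y by simp
  have "(t \<cdot>\<^sub>v y) \<bullet> (S *\<^sub>v x) = t * (y \<bullet> (S *\<^sub>v x))" using S y by simp
  moreover have "(t \<cdot>\<^sub>v y) \<bullet> (S *\<^sub>v (t \<cdot>\<^sub>v y)) = t\<^sup>2 * (y \<bullet> (S *\<^sub>v y))"
    using S y by (simp add: mult_mat_vec[OF S y] power2_eq_square)
  ultimately show ?thesis
    unfolding symmetric_quadratic_form_add[OF S sym x ty] by simp
qed

lemma symmetric_pow_scalar_prod:
  fixes S :: "'a :: comm_semiring_1 mat"
  assumes S: "S \<in> carrier_mat n n" and sym: "transpose_mat S = S" and x: "x \<in> carrier_vec n"
  shows "(S ^\<^sub>m p *\<^sub>v x) \<bullet> (S ^\<^sub>m q *\<^sub>v x) = x \<bullet> (S ^\<^sub>m (p + q) *\<^sub>v x)"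
proof (induction p arbitrary: q)
  case (Suc p)
  have Sx: "S ^\<^sub>m k *\<^sub>v x \<in> carrier_vec n" for k by (rule mult_mat_vec_carrier) (use S x in auto)
  have "(S ^\<^sub>m Suc p *\<^sub>v x) \<bullet> (S ^\<^sub>m q *\<^sub>v x) = (S *\<^sub>v (S ^\<^sub>m p *\<^sub>v x)) \<bullet> (S ^\<^sub>m q *\<^sub>v x)"
    using S x by (simp only: pow_mat_Suc_mult_vec)
  also have "\<dots> = (S ^\<^sub>m p *\<^sub>v x) \<bullet> (S ^\<^sub>m Suc q *\<^sub>v x)"
    using symmetric_scalar_prod_mult_mat_vec[OF S sym Sx Sx] S x
    by (simp del: pow_mat.simps(2) add: pow_mat_Suc_mult_vec)
  finally show ?case by (simp del: pow_mat.simps(2) add: Suc)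
qed (use S x in simp)

lemma quadratic_form_abs_le:
  fixes B :: "real mat"
  assumes B: "B \<in> carrier_mat n n" and x: "x \<in> carrier_vec n"
    and bound: "\<And>i j. i < n \<Longrightarrow> j < n \<Longrightarrow> \<bar>B $$ (i,j)\<bar> \<le> c"
  shows "\<bar>x \<bullet> (B *\<^sub>v x)\<bar> \<le> c * (\<Sum>i<n. \<bar>x $ i\<bar>)\<^sup>2"
proof -
  have "x \<bullet> (B *\<^sub>v x) = (\<Sum>i<n. \<Sum>j<n. x $ i * B $$ (i,j) * x $ j)"
    using B x by (simp add: scalar_prod_def lessThan_atLeast0 sum_distrib_left mult.assoc)
  also have "\<bar>\<dots>\<bar> \<le> (\<Sum>i<n. \<Sum>j<n. \<bar>x $ i\<bar> * c * \<bar>x $ j\<bar>)"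
    by (intro order_trans[OF sum_abs] sum_mono order_trans[OF sum_abs])
      (auto simp: abs_mult intro!: mult_right_mono mult_left_mono bound)
  also have "\<dots> = c * (\<Sum>i<n. \<bar>x $ i\<bar>)\<^sup>2"
    by (simp add: power2_eq_square sum_product sum_distrib_left ac_simps)
  finally show ?thesis .
qed

section \<open>The Rayleigh bound\<close>

lemma spec_rad_nonneg:
  assumes "A \<in> carrier_mat n n" and "n > 0"
  shows "spec_rad A \<ge> 0"
  using spectral_radius_mem_max(1)[of "map_mat complex_of_real A" n] assms
  unfolding spec_rad_def by auto

lemma spectral_radius_smult_le:
  assumes B: "B \<in> carrier_mat n n" and n: "n > 0" and c: "c \<noteq> 0"
  shows "spectral_radius (c \<cdot>\<^sub>m B) \<le> norm c * spectral_radius B"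
proof -
  have cB: "c \<cdot>\<^sub>m B \<in> carrier_mat n n" using B by simp
  obtain lam where "lam \<in> spectrum (c \<cdot>\<^sub>m B)" and sr: "spectral_radius (c \<cdot>\<^sub>m B) = norm lam"
    using spectral_radius_mem_max(1)[OF cB n] by auto
  then obtain v where v: "v \<in> carrier_vec n" "v \<noteq> 0\<^sub>v n" "c \<cdot>\<^sub>v (B *\<^sub>v v) = lam \<cdot>\<^sub>v v"
    using B smult_mat_mult_vec[OF B]
    unfolding spectrum_def eigenvalue_def eigenvector_def by auto
  have "B *\<^sub>v v = (lam / c) \<cdot>\<^sub>v v"
    using arg_cong[OF v(3), of "\<lambda>w. (1 / c) \<cdot>\<^sub>v w"] c by (simp add: smult_smult_assoc)
  then have "lam / c \<in> spectrum B"
    using v B unfolding spectrum_def eigenvalue_def eigenvector_def by auto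
  then have "norm (lam / c) \<le> spectral_radius B"
    using spectral_radius_mem_max(2)[OF B n] by blast
  then show ?thesis using c sr by (simp add: norm_divide field_simps)
qed

lemma pow_mat_entries_bound:
  fixes A :: "real mat"
  assumes A: "A \<in> carrier_mat n n" and mu: "spec_rad A < \<mu>"
  obtains c where "\<And>k i j. i < n \<Longrightarrow> j < n \<Longrightarrow> \<bar>(A ^\<^sub>m k) $$ (i,j)\<bar> \<le> c * \<mu> ^ k"
proof (cases "n = 0")
  case False
  then have n: "n > 0" by simp
  have mu_pos: "\<mu> > 0" using spec_rad_nonneg[OF A n] mu by simp
  define CA where "CA = map_mat complex_of_real A"
  define T where "T = complex_of_real (1 / \<mu>) \<cdot>\<^sub>m CA"
  have CA: "CA \<in> carrier_mat n n" using A unfolding CA_def by simp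
  have "spectral_radius T \<le> (1 / \<mu>) * spec_rad A"
    using spectral_radius_smult_le[OF CA n, of "complex_of_real (1 / \<mu>)"] mu_pos
    unfolding T_def CA_def spec_rad_def by (simp add: norm_divide)
  also have "\<dots> < 1" using mu mu_pos by (simp add: field_simps)
  finally obtain c where c: "norm_bound (T ^\<^sub>m k) c" for k
    using spectral_radius_jnf_norm_bound_less_1_upper_triangular[of T n] CA
    unfolding T_def by auto
  have "map_mat complex_of_real (A ^\<^sub>m k) = complex_of_real (\<mu> ^ k) \<cdot>\<^sub>m T ^\<^sub>m k" for k
  proof -
    have "map_mat complex_of_real (A ^\<^sub>m k) = CA ^\<^sub>m k"
      unfolding CA_def by (rule of_real_hom.mat_hom_pow[OF A])
    also have "CA = complex_of_real \<mu> \<cdot>\<^sub>m T"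
      using mu_pos CA by (intro eq_matI) (auto simp: T_def)
    also have "(complex_of_real \<mu> \<cdot>\<^sub>m T) ^\<^sub>m k = complex_of_real (\<mu> ^ k) \<cdot>\<^sub>m T ^\<^sub>m k"
      using pow_mat_smult[of T n] CA unfolding T_def by simp
    finally show ?thesis .
  qed
  have "\<bar>(A ^\<^sub>m k) $$ (i,j)\<bar> \<le> c * \<mu> ^ k" if "i < n" "j < n" for k i j
  proof -
    have Tc: "T \<in> carrier_mat n n" using CA unfolding T_def by simp
    then have Tk: "T ^\<^sub>m k \<in> carrier_mat n n" by simp
    have "complex_of_real ((A ^\<^sub>m k) $$ (i,j)) = complex_of_real (\<mu> ^ k) * (T ^\<^sub>m k) $$ (i,j)"
      using arg_cong[OF \<open>map_mat _ (A ^\<^sub>m k) = _\<close>, of "\<lambda>M. M $$ (i,j)"] that A carrier_matD[OF Tk]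
      by simp
    then have "\<bar>(A ^\<^sub>m k) $$ (i,j)\<bar> = \<mu> ^ k * norm ((T ^\<^sub>m k) $$ (i,j))"
      using mu_pos by (metis norm_mult norm_of_real abs_of_pos zero_less_power)
    also have "\<dots> \<le> \<mu> ^ k * c"
      using c[of k] that carrier_matD[OF Tc] mu_pos unfolding norm_bound_def by (simp add: mult_left_mono)
    finally show ?thesis by (simp add: mult.commute)
  qed
  then show ?thesis using that by blast
qed (use that in auto)

lemma symmetric_quadratic_form_pow_lower_bound:
  fixes S :: "real mat"
  assumes S: "S \<in> carrier_mat n n" and sym: "transpose_mat S = S" and x: "x \<in> carrier_vec n"
    and mu: "\<mu> \<ge> 0" "\<mu> * (x \<bullet> x) \<le> x \<bullet> (S *\<^sub>v x)"
  shows "\<mu> ^ (2 ^ m) * (x \<bullet> x) \<le> x \<bullet> (S ^\<^sub>m (2 ^ m) *\<^sub>v x)"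
proof (induction m)
  case 0
  then show ?case using S mu by simp
next
  case (Suc m)
  define k where "k = (2::nat) ^ m"
  have Skx: "S ^\<^sub>m k *\<^sub>v x \<in> carrier_vec n" by (rule mult_mat_vec_carrier) (use S x in auto)
  have square: "(S ^\<^sub>m k *\<^sub>v x) \<bullet> (S ^\<^sub>m k *\<^sub>v x) = x \<bullet> (S ^\<^sub>m (2 ^ Suc m) *\<^sub>v x)"
    using symmetric_pow_scalar_prod[OF S sym x, of k k] by (simp add: k_def mult_2)
  have "(\<mu> ^ k * (x \<bullet> x))\<^sup>2 \<le> (x \<bullet> (S ^\<^sub>m k *\<^sub>v x))\<^sup>2"
    using Suc.IH mu(1) scalar_prod_self_nonneg[of x] unfolding k_def by (intro power_mono) auto
  also have "\<dots> \<le> (x \<bullet> x) * (x \<bullet> (S ^\<^sub>m (2 ^ Suc m) *\<^sub>v x))"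
    using scalar_prod_Cauchy_Schwarz[OF x Skx] square by simp
  finally have "(x \<bullet> x) * (\<mu> ^ (2 ^ Suc m) * (x \<bullet> x)) \<le> (x \<bullet> x) * (x \<bullet> (S ^\<^sub>m (2 ^ Suc m) *\<^sub>v x))"
    by (simp add: k_def power2_eq_square power_mult power_add mult_2 ac_simps)
  moreover have "0 \<le> x \<bullet> (S ^\<^sub>m (2 ^ Suc m) *\<^sub>v x)"
    using square scalar_prod_self_nonneg by metis
  ultimately show ?case
    using scalar_prod_self_nonneg[of x] by (cases "x \<bullet> x = 0") auto
qed

lemma symmetric_quadratic_form_le_spec_rad:
  fixes S :: "real mat"
  assumes S: "S \<in> carrier_mat n n" and sym: "transpose_mat S = S" and x: "x \<in> carrier_vec n"
  shows "x \<bullet> (S *\<^sub>v x) \<le> spec_rad S * (x \<bullet> x)"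
proof (rule ccontr)
  define N where "N = x \<bullet> x"
  define \<mu> where "\<mu> = (x \<bullet> (S *\<^sub>v x)) / N"
  assume "\<not> ?thesis"
  then have gt: "spec_rad S * N < x \<bullet> (S *\<^sub>v x)" unfolding N_def by simp
  have "x \<noteq> 0\<^sub>v n"
    using gt x scalar_prod_left_zero[of "S *\<^sub>v x" n] S unfolding N_def by auto
  then have N: "N > 0"
    using scalar_prod_self_nonneg[of x] scalar_prod_self_eq_0_iff[OF x] unfolding N_def by linarith
  have "n > 0" using \<open>x \<noteq> 0\<^sub>v n\<close> x by (cases n) auto
  then have rho: "spec_rad S \<ge> 0" by (rule spec_rad_nonneg[OF S])
  have mu: "spec_rad S < \<mu>" "\<mu> * N = x \<bullet> (S *\<^sub>v x)"
    using gt N unfolding \<mu>_def by (simp_all add: field_simps)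
  define \<nu> where "\<nu> = (spec_rad S + \<mu>) / 2"
  have nu: "spec_rad S < \<nu>" "\<nu> < \<mu>" "0 < \<nu>" using mu rho unfolding \<nu>_def by auto
  obtain c where c: "\<And>k i j. i < n \<Longrightarrow> j < n \<Longrightarrow> \<bar>(S ^\<^sub>m k) $$ (i,j)\<bar> \<le> c * \<nu> ^ k"
    using pow_mat_entries_bound[OF S nu(1)] by blast
  define X where "X = (\<Sum>i<n. \<bar>x $ i\<bar>)"
  have growth: "(\<mu> / \<nu>) ^ (2 ^ m) \<le> c * X\<^sup>2 / N" for m
  proof -
    have "\<mu> ^ (2 ^ m) * N \<le> x \<bullet> (S ^\<^sub>m (2 ^ m) *\<^sub>v x)"
      using symmetric_quadratic_form_pow_lower_bound[OF S sym x, of \<mu> m] mu nu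
      unfolding N_def by simp
    also have "\<dots> \<le> c * \<nu> ^ (2 ^ m) * X\<^sup>2"
      using quadratic_form_abs_le[OF _ x c, of "2 ^ m"] S unfolding X_def by simp
    finally show ?thesis using N nu by (simp add: field_simps)
  qed
  have "1 < \<mu> / \<nu>" using nu by simp
  then obtain m where "c * X\<^sup>2 / N < (\<mu> / \<nu>) ^ m" using real_arch_pow by blast
  also have "\<dots> \<le> (\<mu> / \<nu>) ^ (2 ^ m)"
    using \<open>1 < \<mu> / \<nu>\<close> by (intro power_increasing) (auto intro: less_imp_le less_exp)
  finally show False using growth[of m] by simp
qed

lemma nonneg_quadratic_linear_coeff_eq_0:
  fixes b c :: real
  assumes "\<And>t. 0 \<le> b * t + c * t\<^sup>2"
  shows "b = 0"
proof (rule ccontr)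
  assume "b \<noteq> 0"
  define d where "d = \<bar>c\<bar> + 1"
  define t where "t = - b / d"
  have d: "d > 0" "c < d" unfolding d_def by auto
  have "t\<^sup>2 > 0" using \<open>b \<noteq> 0\<close> d unfolding t_def by simp
  then have "c * t\<^sup>2 < d * t\<^sup>2" using d by simp
  also have "d * t\<^sup>2 = - (b * t)" using d unfolding t_def by (simp add: power2_eq_square)
  finally show False using assms[of t] by simp
qed

lemma rayleigh_maximizer_eigenvector:
  fixes S :: "real mat"
  assumes S: "S \<in> carrier_mat n n" and sym: "transpose_mat S = S"
    and max: "\<And>x. x \<in> carrier_vec n \<Longrightarrow> x \<bullet> (S *\<^sub>v x) \<le> \<rho> * (x \<bullet> x)"
    and u: "u \<in> carrier_vec n" and attained: "u \<bullet> (S *\<^sub>v u) = \<rho> * (u \<bullet> u)"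
  shows "S *\<^sub>v u = \<rho> \<cdot>\<^sub>v u"
proof -
  define y where "y = S *\<^sub>v u - \<rho> \<cdot>\<^sub>v u"
  \<comment> \<open>Along u + t y the form x \<bullet> S x - \<rho> (x \<bullet> x) is maximal at t = 0, so its slope
    -2 (y \<bullet> y) there vanishes.\<close>
  have y: "y \<in> carrier_vec n" using S u unfolding y_def by simp
  have I: "1\<^sub>m n \<in> carrier_mat n n" "transpose_mat (1\<^sub>m n) = (1\<^sub>m n :: real mat)" by auto
  have "y \<bullet> (S *\<^sub>v u) - \<rho> * (y \<bullet> u) = y \<bullet> y"
    using S u y unfolding y_def by (simp add: scalar_prod_minus_distrib[of _ n])
  moreover have "(u + t \<cdot>\<^sub>v y) \<bullet> (S *\<^sub>v (u + t \<cdot>\<^sub>v y))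
      \<le> \<rho> * ((u + t \<cdot>\<^sub>v y) \<bullet> (1\<^sub>m n *\<^sub>v (u + t \<cdot>\<^sub>v y)))" for t
    using max[of "u + t \<cdot>\<^sub>v y"] u y by simp
  ultimately have "0 \<le> (- 2 * (y \<bullet> y)) * t + (\<rho> * (y \<bullet> y) - y \<bullet> (S *\<^sub>v y)) * t\<^sup>2" for t
    unfolding symmetric_quadratic_form_add_smult[OF S sym u y]
      symmetric_quadratic_form_add_smult[OF I u y]
    using u y attained by (simp add: algebra_simps)
  then have "y \<bullet> y = 0" using nonneg_quadratic_linear_coeff_eq_0 by fastforce
  then have "y = 0\<^sub>v n" using scalar_prod_self_eq_0_iff[OF y] by simp
  show ?thesis
  proof (rule eq_vecI)
    fix i assume "i < dim_vec (\<rho> \<cdot>\<^sub>v u)"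
    then have "i < n" using u by simp
    then show "(S *\<^sub>v u) $ i = (\<rho> \<cdot>\<^sub>v u) $ i"
      using \<open>y = 0\<^sub>v n\<close> S u unfolding y_def by (auto dest!: arg_cong[where f = "\<lambda>v. v $ i"])
  qed (use S u in simp)
qed

section \<open>Nonnegative matrices and skew perturbations\<close>

lemma nonneg_mat_spec_rad_subinvariant_vec:
  fixes A :: "real mat"
  assumes A: "A \<in> carrier_mat n n" and n: "n > 0" and nonneg: "nonneg_mat A"
  obtains u where "u \<in> carrier_vec n" "u \<noteq> 0\<^sub>v n" "0\<^sub>v n \<le> u" "spec_rad A \<cdot>\<^sub>v u \<le> A *\<^sub>v u"
proof -
  define CA where "CA = map_mat complex_of_real A"
  have CA: "CA \<in> carrier_mat n n" using A unfolding CA_def by simp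
  obtain lam where "lam \<in> spectrum CA" and lam: "spec_rad A = norm lam"
    using spectral_radius_mem_max(1)[OF CA n] unfolding spec_rad_def CA_def by auto
  then obtain z where z: "z \<in> carrier_vec n" "z \<noteq> 0\<^sub>v n" "CA *\<^sub>v z = lam \<cdot>\<^sub>v z"
    using CA unfolding spectrum_def eigenvalue_def eigenvector_def by auto
  define u where "u = vec n (\<lambda>i. norm (z $ i))"
  have "u \<noteq> 0\<^sub>v n"
  proof
    assume "u = 0\<^sub>v n"
    have "norm (z $ i) = 0" if "i < n" for i
    proof -
      have "norm (z $ i) = u $ i" using that unfolding u_def by simp
      then show ?thesis using \<open>u = 0\<^sub>v n\<close> that by simp
    qed
    then have "z = 0\<^sub>v n" using z(1) by (intro eq_vecI) auto
    then show False using z(2) by contradiction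
  qed
  moreover have "spec_rad A * u $ i \<le> (A *\<^sub>v u) $ i" if i: "i < n" for i
  proof -
    have "spec_rad A * u $ i = norm ((CA *\<^sub>v z) $ i)"
      using z i lam unfolding u_def by (simp add: norm_mult)
    also have "\<dots> = norm (\<Sum>j<n. complex_of_real (A $$ (i,j)) * z $ j)"
      using i A z(1) unfolding CA_def by (simp add: scalar_prod_def lessThan_atLeast0)
    also have "\<dots> \<le> (\<Sum>j<n. A $$ (i,j) * norm (z $ j))"
      using nonneg A i unfolding nonneg_mat_def
      by (intro order_trans[OF norm_sum] sum_mono) (simp add: norm_mult)
    also have "\<dots> = (A *\<^sub>v u) $ i"
      using i A unfolding u_def by (simp add: scalar_prod_def lessThan_atLeast0)
    finally show ?thesis .
  qed
  moreover have "u \<in> carrier_vec n" "0\<^sub>v n \<le> u" unfolding u_def less_eq_vec_def by auto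
  ultimately show ?thesis
    using A by (intro that[of u]) (auto simp: less_eq_vec_def)
qed

lemma nonneg_irreducible_eigenvector_pos:
  fixes S :: "real mat"
  assumes S: "S \<in> carrier_mat n n" and nonneg: "nonneg_mat S" and irr: "irreducible_mat S"
    and u: "u \<in> carrier_vec n" "u \<noteq> 0\<^sub>v n" "0\<^sub>v n \<le> u" and eigen: "S *\<^sub>v u = \<rho> \<cdot>\<^sub>v u"
    and i: "i < n"
  shows "u $ i > 0"
proof (rule ccontr)
  assume "\<not> u $ i > 0"
  define I where "I = {k. k < n \<and> u $ k = 0}"
  have u_nonneg: "u $ k \<ge> 0" if "k < n" for k
    using u(1,3) that unfolding less_eq_vec_def by auto
  have "I \<noteq> {}" using \<open>\<not> u $ i > 0\<close> u_nonneg[OF i] i unfolding I_def by auto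
  have "\<exists>i0<n. u $ i0 \<noteq> 0"
  proof (rule ccontr)
    assume "\<not> ?thesis"
    then have "u = 0\<^sub>v n" using u(1) by (intro eq_vecI) auto
    then show False using u(2) by contradiction
  qed
  then obtain i0 where "i0 < n" "u $ i0 \<noteq> 0" by blast
  have "I \<subseteq> {0..<n}" unfolding I_def by auto
  moreover have "i0 \<notin> I" unfolding I_def using \<open>u $ i0 \<noteq> 0\<close> by simp
  ultimately have "I \<subset> {0..<n}" using \<open>i0 < n\<close> by auto
  moreover have "S $$ (k,j) = 0" if k: "k \<in> I" and j: "j \<in> {0..<n} - I" for k j
  proof -
    have "k < n" "u $ k = 0" "j < n" using k j unfolding I_def by auto
    have "u $ j > 0" using j u_nonneg unfolding I_def by (auto simp: order.strict_iff_order)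
    have "(\<Sum>l\<in>{0..<n}. S $$ (k,l) * u $ l) = 0"
      using arg_cong[OF eigen, of "\<lambda>v. v $ k"] S u(1) \<open>k < n\<close> \<open>u $ k = 0\<close>
      by (simp add: scalar_prod_def)
    moreover have "0 \<le> S $$ (k,l) * u $ l" if "l < n" for l
      using nonneg S \<open>k < n\<close> that u_nonneg[OF that] unfolding nonneg_mat_def by simp
    ultimately have "\<forall>l\<in>{0..<n}. S $$ (k,l) * u $ l = 0"
      by (subst (asm) sum_nonneg_eq_0_iff) auto
    then have "S $$ (k,j) * u $ j = 0" using \<open>j < n\<close> by simp
    then show ?thesis using \<open>u $ j > 0\<close> by simp
  qed
  ultimately have "\<exists>I. I \<noteq> {} \<and> I \<subset> {0..<n} \<and> (\<forall>k\<in>I. \<forall>j\<in>{0..<n} - I. S $$ (k,j) = 0)"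
    using \<open>I \<noteq> {}\<close> by blast
  then show False using irr S unfolding irreducible_mat_def by simp
qed

lemma spec_rad_add_skew_neq:
  fixes S K :: "real mat"
  assumes n: "n > 0" and S: "S \<in> carrier_mat n n" and K: "K \<in> carrier_mat n n"
    and sym: "transpose_mat S = S" and S_nonneg: "nonneg_mat S" and irr: "irreducible_mat S"
    and skew: "transpose_mat K = - K" and det: "det K \<noteq> 0" and A_nonneg: "nonneg_mat (S + K)"
  shows "spec_rad (S + K) \<noteq> spec_rad S"
proof
  define \<rho> where "\<rho> = spec_rad S"
  assume "spec_rad (S + K) = spec_rad S"
  then obtain u where u: "u \<in> carrier_vec n" "u \<noteq> 0\<^sub>v n" "0\<^sub>v n \<le> u"
    and sub: "\<rho> \<cdot>\<^sub>v u \<le> S *\<^sub>v u + K *\<^sub>v u"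
    using nonneg_mat_spec_rad_subinvariant_vec[OF add_carrier_mat[OF K] n A_nonneg] S K
    unfolding \<rho>_def by (metis add_mult_distrib_mat_vec)
  have "\<rho> * (u \<bullet> u) \<le> u \<bullet> (S *\<^sub>v u + K *\<^sub>v u)"
    using scalar_prod_left_mono[OF u(1,3) sub] S K u by simp
  also have "\<dots> = u \<bullet> (S *\<^sub>v u)"
    using skew_quadratic_form_eq_0[OF K skew u(1)] S K u by (simp add: scalar_prod_add_distrib[of _ n])
  finally have "u \<bullet> (S *\<^sub>v u) = \<rho> * (u \<bullet> u)"
    using symmetric_quadratic_form_le_spec_rad[OF S sym u(1)] unfolding \<rho>_def by linarith
  then have Su: "S *\<^sub>v u = \<rho> \<cdot>\<^sub>v u"
    using rayleigh_maximizer_eigenvector[OF S sym _ u(1)] symmetric_quadratic_form_le_spec_rad[OF S sym]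
    unfolding \<rho>_def by blast
  have "0\<^sub>v n \<le> K *\<^sub>v u"
    using sub K u unfolding Su less_eq_vec_def by auto
  then have "K *\<^sub>v u = 0\<^sub>v n"
    using scalar_prod_pos_nonneg_eq_0[OF u(1) _ _ _ skew_quadratic_form_eq_0[OF K skew u(1)]]
      nonneg_irreducible_eigenvector_pos[OF S S_nonneg irr u Su] K u by simp
  then show False using det det_0_iff_vec_prod_zero[OF K] u by blast
qed

theorem corollary3:
  fixes S K :: "real mat" and n :: nat
  assumes "n > 0"
    and "S \<in> carrier_mat n n" and "K \<in> carrier_mat n n"
    and "transpose_mat S = S"
    and "nonneg_mat S"
    and "irreducible_mat S"
    and "transpose_mat K = - K"
    and "det K \<noteq> 0"
    and "nonneg_mat (S + K)"
  shows "even n \<and>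
    \<not> (\<exists>c. \<forall>t\<in>{0..1::real}.
          spec_rad ((1 - t) \<cdot>\<^sub>m (S + K) + t \<cdot>\<^sub>m transpose_mat (S + K)) = c)"
proof
  note S = assms(2) and K = assms(3) and sym = assms(4) and skew = assms(7)
  show "even n" using det_skew_symmetric_odd[OF K skew] assms(8) by blast
  let ?M = "\<lambda>t::real. (1 - t) \<cdot>\<^sub>m (S + K) + t \<cdot>\<^sub>m transpose_mat (S + K)"
  have "?M 0 = S + K" using S K by (intro eq_matI) auto
  moreover have "?M (1/2) = S"
    using S K by (intro eq_matI) (auto simp: transpose_add sym skew field_simps)
  ultimately have neq: "spec_rad (?M 0) \<noteq> spec_rad (?M (1/2))"
    using spec_rad_add_skew_neq[OF assms(1-3) sym assms(5,6) skew assms(8,9)] by simp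
  show "\<not> (\<exists>c. \<forall>t\<in>{0..1::real}. spec_rad (?M t) = c)"
  proof
    assume "\<exists>c. \<forall>t\<in>{0..1::real}. spec_rad (?M t) = c"
    then obtain c where c: "\<forall>t\<in>{0..1::real}. spec_rad (?M t) = c" by blast
    have "spec_rad (?M 0) = c" "spec_rad (?M (1/2)) = c"
      using c[rule_format, of 0] c[rule_format, of "1/2"] by simp_all
    with neq show False by simp
  qed
qed

end
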